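(* The following two statements are equivalent. (i) For every amphicheiral knot $K$, with Conway polynomial $C(z)$, there is $F\in\mathbb Z_4[z^2]$ with $F^2=C(z)\,C(z^2)\,C(iz)$ in $\mathbb Z_4[z^2]$. (ii) For every amphicheiral knot $K$ and every $i\ge 1$, $pc_{4i}(K)\equiv 0\pmod 2$.
   Context: A knot is amphicheiral if it is isotopic to its mirror image, disregarding string orientation. The Conway polynomial $C(z)$ of a knot lies in $1+z^2\mathbb Z[z^2]$. Define $\exp_{\mathbb Z}\colon x\mathbb Z[[x]]\to 1+x\mathbb Z[[x]]$ by $\exp_{\mathbb Z}\big(\sum_{i\ge1} b_i x^i\big)=\prod_{i\ge 1}(1+(-x)^i)^{b_i}$; it is a bijection taking addition to multiplication, and $\log_{\mathbb Z}$ denotes its inverse. Regarding $C$ as a power series in the variable $x=z^2$, write $\log_{\mathbb Z}(C)=\sum_{i\ge1} pc_{2i}\, z^{2i}$; the integers $pc_{2i}=pc_{2i}(K)$ are knot invariants. The product $C(z)C(z^2)C(iz)$ lies in $\mathbb Z[z^2]$ and is reduced modulo $4$. *)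

theory Defs
  imports "HOL-Computational_Algebra.Polynomial" "HOL-Library.Numeral_Type"
begin

definition conway_type :: "int poly \<Rightarrow> bool" where
  "conway_type C \<longleftrightarrow> coeff C 0 = 1 \<and> (\<forall>n. odd n \<longrightarrow> coeff C n = 0)"

definition conway_sq :: "int poly \<Rightarrow> int poly" where
  "conway_sq C = pcompose C [:0, 0, 1:]"

text \<open>C(iz) for an even polynomial C: the coefficient of z^(2k) is multiplied by i^(2k) = (-1)^k.\<close>
definition conway_iz :: "int poly \<Rightarrow> int poly" where
  "conway_iz C = (\<Sum>n\<le>degree C. monom ((if even n then (-1) ^ (n div 2) else 0) * coeff C n) n)"

text \<open>The polynomial C regarded as a polynomial in x = z^2.\<close>
definition conway_x :: "int poly \<Rightarrow> int poly" where
  "conway_x C = (\<Sum>n\<le>degree C. monom (coeff C (2 * n)) n)"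

text \<open>exp_Z truncated: positive and negative parts of prod_{i=1..N} (1+(-x)^i)^(b i).\<close>
definition expZ_pos :: "(nat \<Rightarrow> int) \<Rightarrow> nat \<Rightarrow> int poly" where
  "expZ_pos b N = (\<Prod>i\<in>{1..N}. (1 + (- [:0, 1:]) ^ i) ^ nat (b i))"

definition expZ_neg :: "(nat \<Rightarrow> int) \<Rightarrow> nat \<Rightarrow> int poly" where
  "expZ_neg b N = (\<Prod>i\<in>{1..N}. (1 + (- [:0, 1:]) ^ i) ^ nat (- b i))"

text \<open>b is log_Z(c), i.e. exp_Z(sum b_i x^i) = c as power series in x:
  for every N, c * (negative part) agrees with (positive part) up to x^N
  (factors with i > N do not affect coefficients up to x^N).\<close>
definition is_logZ :: "int poly \<Rightarrow> (nat \<Rightarrow> int) \<Rightarrow> bool" where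
  "is_logZ c b \<longleftrightarrow> b 0 = 0 \<and>
     (\<forall>N k. k \<le> N \<longrightarrow> coeff (c * expZ_neg b N) k = coeff (expZ_pos b N) k)"

definition logZ :: "int poly \<Rightarrow> nat \<Rightarrow> int" where
  "logZ c = (THE b. is_logZ c b)"

text \<open>pc_{2i}(C) = the coefficient of z^{2i} in log_Z(C) = coefficient of x^i.\<close>
definition pc :: "int poly \<Rightarrow> nat \<Rightarrow> int" where
  "pc C m = (if even m then logZ (conway_x C) (m div 2) else 0)"

definition mod4 :: "int poly \<Rightarrow> 4 poly" where
  "mod4 p = map_poly of_int p"

end

theory Submission
  imports Defs
begin

text \<open>The two conditions are equivalent for each polynomial of Conway type separately. Write \<open>C(z) = c(z\<^sup>2)\<close> and \<open>T(q)(x) = q(x) q(x\<^sup>2) q(-x)\<close>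
  (\<open>triple_prod\<close> below); then \<open>C(z) C(z\<^sup>2) C(iz) = T(c)(z\<^sup>2)\<close>, and the question is whether \<open>T(c)\<close>
  is a square modulo 4. The map \<open>T\<close> is multiplicative and sends the factor \<open>1 + (-x)\<^sup>i\<close> of
  \<open>exp\<^sub>\<int>\<close> to \<open>(1 - x\<^sup>2\<^sup>i)\<^sup>2\<close> for odd \<open>i\<close> and to \<open>(1 + x\<^sup>i)\<^sup>2 (1 + x\<^sup>2\<^sup>i)\<close> for even \<open>i\<close>. Hence,
  with \<open>b = log\<^sub>\<int>(c)\<close> and up to squares of power series with constant term 1, \<open>T(c)\<close> is the
  product of the \<open>(1 + x\<^sup>2\<^sup>i)\<close> to the powers \<open>b\<^sub>i\<close> over even \<open>i\<close>; and \<open>b\<^sub>2\<^sub>j = pc\<^sub>4\<^sub>j\<close>.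

  If all \<open>b\<^sub>2\<^sub>j\<close> are even, \<open>T(c)\<close> is the square of a power series modulo 4, hence of a
  polynomial: modulo 2 squaring is the substitution \<open>x \<mapsto> x\<^sup>2\<close>, so the root may be truncated
  above \<open>deg T(c)\<close>. If \<open>n = 2j\<close> is least with \<open>b\<^sub>n\<close> odd, a square root of \<open>T(c)\<close> modulo 4
  yields \<open>U\<^sup>2 (1 + x\<^sup>2\<^sup>n)\<^sup>k \<equiv> V\<^sup>2 (1 + x\<^sup>2\<^sup>n)\<^sup>l\<close> modulo \<open>(4, x\<^sup>2\<^sup>n\<^sup>+\<^sup>1)\<close> with \<open>k + l\<close> odd and
  \<open>U(0), V(0)\<close> odd. Modulo 2 this halves to \<open>U (1 + x\<^sup>n)\<^sup>k \<equiv> V (1 + x\<^sup>n)\<^sup>l\<close> modulo \<open>(2, x\<^sup>n\<^sup>+\<^sup>1)\<close>;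
  squaring that and comparing coefficients of \<open>x\<^sup>n\<close> gives \<open>2k \<equiv> 2l\<close> modulo 4, a contradiction.\<close>

section \<open>The substitutions \<open>x \<mapsto> x\<^sup>2\<close> and \<open>x \<mapsto> -x\<close>\<close>

lemma coeff_pcompose_x2:
  "coeff (pcompose p [:0, 0, 1:]) n = (if even n then coeff p (n div 2) else (0::'a::comm_semiring_1))"
proof (induction p arbitrary: n)
  case (pCons a p)
  show ?case
  proof (cases n)
    case (Suc k)
    then show ?thesis
      using pCons.IH[of "k - 1"] by (cases k) (auto simp: pcompose_pCons coeff_pCons)
  qed (simp add: pcompose_pCons)
qed simp

lemma coeff_pcompose_neg_x:
  "coeff (pcompose p [:0, -1:]) n = (-1) ^ n * (coeff p n :: 'a::comm_ring_1)"
  using coeff_pcompose_monom_linear[of p "-1" n] by (simp add: monom_Suc monom_0)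

lemma neg_x_power: "[:0, -1:] ^ n = (monom ((-1) ^ n) n :: 'a::comm_ring_1 poly)"
  by (induction n) (simp_all add: monom_Suc smult_monom monom_0)

lemma pcompose_power: "pcompose (p ^ n) r = pcompose p r ^ n"
  by (induction n) (simp_all add: pcompose_1 pcompose_mult)

lemma pcompose_monom_x2: "pcompose (monom a n) [:0, 0, 1:] = (monom a (2 * n) :: 'a::comm_semiring_1 poly)"
  by (rule poly_eqI) (auto simp: coeff_pcompose_x2 coeff_monom elim!: oddE)

lemma pcompose_x2_inject:
  "pcompose p [:0, 0, 1:] = pcompose q [:0, 0, 1:] \<longleftrightarrow> p = (q :: 'a::comm_semiring_1 poly)"
proof
  assume "pcompose p [:0, 0, 1:] = pcompose q [:0, 0, 1:]"
  then have "coeff (pcompose p [:0, 0, 1:]) (2 * n) = coeff (pcompose q [:0, 0, 1:]) (2 * n)" for n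
    by simp
  then show "p = q" by (intro poly_eqI) (simp add: coeff_pcompose_x2)
qed simp

section \<open>Congruences modulo \<open>(m, x\<^sup>N\<^sup>+\<^sup>1)\<close>\<close>

text \<open>\<open>trunc_cong m N p q\<close> says \<open>p \<equiv> q\<close> modulo the ideal \<open>(m, x\<^sup>N\<^sup>+\<^sup>1)\<close> of \<open>\<int>[x]\<close>;
  for \<open>m = 0\<close> it says that \<open>p\<close> and \<open>q\<close> agree up to \<open>x\<^sup>N\<close>.\<close>

definition trunc_cong :: "int \<Rightarrow> nat \<Rightarrow> int poly \<Rightarrow> int poly \<Rightarrow> bool" where
  "trunc_cong m N p q \<longleftrightarrow> (\<forall>k\<le>N. m dvd coeff p k - coeff q k)"

lemma trunc_cong_refl [simp]: "trunc_cong m N p p"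
  by (simp add: trunc_cong_def)

lemma trunc_cong_sym: "trunc_cong m N p q \<Longrightarrow> trunc_cong m N q p"
  unfolding trunc_cong_def by (metis dvd_diff_commute)

lemma trunc_cong_trans: "trunc_cong m N p q \<Longrightarrow> trunc_cong m N q r \<Longrightarrow> trunc_cong m N p r"
  unfolding trunc_cong_def by (metis diff_add_cancel dvd_add add_diff_eq diff_diff_eq2)

lemma trunc_cong_replace:
  "trunc_cong m N p p' \<Longrightarrow> trunc_cong m N q q' \<Longrightarrow> trunc_cong m N p q \<Longrightarrow> trunc_cong m N p' q'"
  by (meson trunc_cong_sym trunc_cong_trans)

lemma trunc_cong_mono:
  "trunc_cong m N p q \<Longrightarrow> m' dvd m \<Longrightarrow> N' \<le> N \<Longrightarrow> trunc_cong m' N' p q"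
  unfolding trunc_cong_def by (meson dvd_trans order_trans)

lemma trunc_cong_iff:
  "trunc_cong m N p q \<longleftrightarrow> (\<exists>h w. p = q + smult m h + monom 1 (Suc N) * w)"
proof
  assume cong: "trunc_cong m N p q"
  define h where "h = (\<Sum>k\<le>N. monom ((coeff p k - coeff q k) div m) k)"
  have "\<forall>k<Suc N. coeff (p - q - smult m h) k = 0"
    using cong by (auto simp: trunc_cong_def h_def coeff_sum_monom)
  then obtain w where "p - q - smult m h = monom 1 (Suc N) * w"
    by (metis monom_1_dvd_iff' dvdE)
  then have "p = q + smult m h + monom 1 (Suc N) * w"
    by (simp add: algebra_simps)
  then show "\<exists>h w. p = q + smult m h + monom 1 (Suc N) * w" by blast
qed (auto simp: trunc_cong_def coeff_monom_mult)

lemma trunc_cong_mult: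
  assumes "trunc_cong m N p p'" and "trunc_cong m N q q'"
  shows "trunc_cong m N (p * q) (p' * q')"
proof -
  obtain h w where p: "p = p' + smult m h + monom 1 (Suc N) * w"
    using assms(1) trunc_cong_iff by blast
  obtain h' w' where q: "q = q' + smult m h' + monom 1 (Suc N) * w'"
    using assms(2) trunc_cong_iff by blast
  have "p * q = p' * q' + smult m (h * q + p' * h') + monom 1 (Suc N) * (w * q + p' * w')"
    unfolding p q by (simp add: algebra_simps smult_add_right)
  then show ?thesis
    unfolding trunc_cong_iff by blast
qed

lemma trunc_cong_power: "trunc_cong m N p q \<Longrightarrow> trunc_cong m N (p ^ k) (q ^ k)"
  by (induction k) (auto intro: trunc_cong_mult)

lemma trunc_cong_prod:
  "(\<And>i. i \<in> A \<Longrightarrow> trunc_cong m N (f i) (g i)) \<Longrightarrow> trunc_cong m N (prod f A) (prod g A)"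
  by (induction A rule: infinite_finite_induct) (auto intro: trunc_cong_mult)

lemma trunc_cong_pcompose_x2_iff:
  "trunc_cong m (2 * N) (pcompose p [:0, 0, 1:]) (pcompose q [:0, 0, 1:]) \<longleftrightarrow> trunc_cong m N p q"
proof
  assume "trunc_cong m (2 * N) (pcompose p [:0, 0, 1:]) (pcompose q [:0, 0, 1:])"
  then have "m dvd coeff p k - coeff q k" if "k \<le> N" for k
    using that unfolding trunc_cong_def by (auto dest!: spec[of _ "2 * k"] simp: coeff_pcompose_x2)
  then show "trunc_cong m N p q"
    by (simp add: trunc_cong_def)
qed (auto simp: trunc_cong_def coeff_pcompose_x2)

lemma trunc_cong_pcompose_neg_x:
  "trunc_cong m N p q \<Longrightarrow> trunc_cong m N (pcompose p [:0, -1:]) (pcompose q [:0, -1:])"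
  unfolding trunc_cong_def by (simp add: coeff_pcompose_neg_x flip: right_diff_distrib)

lemma trunc_cong_squares:
  assumes "trunc_cong 2 N p q"
  shows "trunc_cong 4 N (p\<^sup>2) (q\<^sup>2)"
proof -
  obtain h w where p: "p = q + smult 2 h + monom 1 (Suc N) * w"
    using assms trunc_cong_iff by blast
  have "p\<^sup>2 = q\<^sup>2 + smult 4 (q * h + h\<^sup>2)
      + monom 1 (Suc N) * (2 * q * w + 4 * h * w + monom 1 (Suc N) * w\<^sup>2)"
    unfolding p by (simp only: numeral_mult_conv_smult[symmetric]) (simp add: algebra_simps power2_eq_square)
  then show ?thesis
    unfolding trunc_cong_iff by blast
qed

lemma trunc_cong_inverse:
  assumes "coeff w 0 = 1"
  obtains v where "trunc_cong m N (w * v) 1"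
proof -
  have "coeff (1 - w) 0 = 0" using assms by simp
  then obtain u where u: "1 - w = monom 1 1 * u"
    using monom_1_dvd_iff'[of 1 "1 - w"] by (auto elim: dvdE)
  define y where "y = monom 1 1 * u"
  have "w = 1 - y" using u by (simp add: y_def)
  then have "w * (\<Sum>i\<le>N. y ^ i) = 1 - y ^ Suc N"
    by (simp only: sum_gp_basic)
  also have "\<dots> = 1 + smult m 0 + monom 1 (Suc N) * (- (u ^ Suc N))"
    by (simp add: y_def power_mult_distrib monom_power mult_monom)
  finally show ?thesis
    using that trunc_cong_iff by blast
qed

lemma square_eq_pcompose_x2_mod_2: "\<exists>h. f\<^sup>2 = pcompose f [:0, 0, 1:] + smult 2 (h :: int poly)"
proof (induction f)
  case (pCons a p)
  then obtain h where h: "p\<^sup>2 = pcompose p [:0, 0, 1:] + smult 2 h" by blast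
  have "(pCons a p)\<^sup>2 = ([:a:] + [:0, 1:] * p)\<^sup>2" by simp
  also have "\<dots> = [:a * a:] + smult (2 * a) ([:0, 1:] * p) + [:0, 0, 1:] * p\<^sup>2"
    unfolding power2_sum
    by (simp add: power_mult_distrib power2_eq_square numeral_mult_conv_smult add_ac mult.commute[of a 2])
  also have "\<dots> = pcompose (pCons a p) [:0, 0, 1:]
      + smult 2 ([:(a * a - a) div 2:] + smult a ([:0, 1:] * p) + [:0, 0, 1:] * h)"
  proof -
    have "even (a * a - a)" by simp
    then have "[:a * a:] = [:a:] + smult 2 [:(a * a - a) div 2:]" by simp
    then show ?thesis
      unfolding h pcompose_pCons by (simp add: smult_add_right distrib_left add_ac)
  qed
  finally show ?case by blast
qed simp

lemma trunc_cong_square_pcompose_x2: "trunc_cong 2 N (f\<^sup>2) (pcompose f [:0, 0, 1:])"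
proof -
  obtain h where "f\<^sup>2 = pcompose f [:0, 0, 1:] + smult 2 h"
    using square_eq_pcompose_x2_mod_2 by blast
  then show ?thesis
    unfolding trunc_cong_iff by (intro exI[of _ h] exI[of _ 0]) simp
qed

lemma trunc_cong_one_plus_monom_power:
  assumes "s \<ge> 1"
  shows "trunc_cong 0 s ((1 + monom a s) ^ k) (1 + monom (of_nat k * a) s)"
proof (induction k)
  case (Suc k)
  then have "trunc_cong 0 s ((1 + monom a s) ^ Suc k) ((1 + monom (of_nat k * a) s) * (1 + monom a s))"
    by (simp add: trunc_cong_mult mult.commute)
  moreover have "trunc_cong 0 s ((1 + monom (of_nat k * a) s) * (1 + monom a s)) (1 + monom (of_nat (Suc k) * a) s)"
    using assms by (auto simp: trunc_cong_def mult_monom coeff_monom algebra_simps)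
  ultimately show ?case
    by (rule trunc_cong_trans)
qed simp

lemma mod4_eq_iff_trunc_cong: "mod4 p = mod4 q \<longleftrightarrow> (\<forall>N. trunc_cong 4 N p q)"
proof -
  have of_int_eq: "(of_int a :: 4) = of_int b \<longleftrightarrow> (4::int) dvd a - b" for a b
    using of_int_eq_0_iff_char_dvd[where 'a = 4, of "a - b"] by simp
  show ?thesis
    unfolding mod4_def poly_eq_iff trunc_cong_def by (auto simp: coeff_map_poly of_int_eq)
qed

lemma trunc_cong_poly_cutoff_of_square:
  assumes "trunc_cong 2 N P (f\<^sup>2)"
  shows "trunc_cong 2 (N div 2) f (poly_cutoff (Suc (degree P)) f)"
  unfolding trunc_cong_def
proof (intro allI impI)
  fix k assume k: "k \<le> N div 2"
  have "trunc_cong 2 N P (pcompose f [:0, 0, 1:])"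
    using assms trunc_cong_square_pcompose_x2 by (rule trunc_cong_trans)
  then have "2 dvd coeff P (2 * k) - coeff f k"
    using k by (auto simp: trunc_cong_def coeff_pcompose_x2)
  moreover have "coeff P (2 * k) = 0" if "\<not> k < Suc (degree P)"
    using that by (intro coeff_eq_0) simp
  ultimately show "2 dvd coeff f k - coeff (poly_cutoff (Suc (degree P)) f) k"
    by (auto simp: coeff_poly_cutoff)
qed

lemma mod4_square_of_trunc_cong_square:
  assumes cong: "trunc_cong 4 N P (f\<^sup>2)" and N: "4 * degree P \<le> N"
  shows "\<exists>g. mod4 P = mod4 (g\<^sup>2)"
proof -
  define g where "g = poly_cutoff (Suc (degree P)) f"
  have "trunc_cong 2 (N div 2) f g"
    using trunc_cong_poly_cutoff_of_square trunc_cong_mono[OF cong] g_def by simp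
  then have "trunc_cong 4 (N div 2) (f\<^sup>2) (g\<^sup>2)"
    by (rule trunc_cong_squares)
  then have low: "trunc_cong 4 (N div 2) P (g\<^sup>2)"
    using trunc_cong_mono[OF cong, of 4 "N div 2"] trunc_cong_trans by simp
  have "degree g \<le> degree P"
    by (rule degree_le) (simp add: g_def coeff_poly_cutoff)
  then have "degree (g\<^sup>2) \<le> 2 * degree P"
    using degree_power_le[of g 2] by simp
  then have high: "coeff P k = 0 \<and> coeff (g\<^sup>2) k = 0" if "k > N div 2" for k
    using that N by (auto intro!: coeff_eq_0)
  have "4 dvd coeff P k - coeff (g\<^sup>2) k" for k
    using low high[of k] by (cases "k \<le> N div 2") (auto simp: trunc_cong_def)
  then show ?thesis
    unfolding mod4_eq_iff_trunc_cong trunc_cong_def by blast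
qed

lemma coeff_mult_one_plus_monom:
  "j \<le> s \<Longrightarrow> coeff (p * (1 + monom a s)) j = coeff p j + (if j = s then a * coeff p 0 else 0)"
  by (simp add: distrib_left mult.commute[of p] coeff_monom_mult)

lemma trunc_cong_square_one_plus_monom_power:
  assumes "n \<ge> 1"
  shows "trunc_cong m n ((W * (1 + monom 1 n) ^ j)\<^sup>2) (W\<^sup>2 * (1 + monom (2 * of_nat j) n))"
proof -
  have "trunc_cong 0 n ((1 + monom 1 n) ^ (2 * j)) (1 + monom (of_nat (2 * j)) n)"
    using trunc_cong_one_plus_monom_power[OF assms, of 1 "2 * j"] by simp
  then show ?thesis
    unfolding power_mult_distrib power_mult[symmetric] mult.commute[of j]
    by (auto intro: trunc_cong_mult trunc_cong_mono)
qed

lemma trunc_cong_halve_twisted_squares: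
  fixes U V :: "int poly"
  assumes "trunc_cong 2 (2 * n) (U\<^sup>2 * (1 + monom 1 (2 * n)) ^ k) (V\<^sup>2 * (1 + monom 1 (2 * n)) ^ l)"
  shows "trunc_cong 2 n (U * (1 + monom 1 n) ^ k) (V * (1 + monom 1 n) ^ l)"
proof -
  have "trunc_cong 2 (2 * n) (W\<^sup>2 * (1 + monom 1 (2 * n)) ^ j) (pcompose (W * (1 + monom 1 n) ^ j) [:0, 0, 1:])"
    for W j
    unfolding pcompose_mult pcompose_power pcompose_add pcompose_1 pcompose_monom_x2
    by (intro trunc_cong_mult trunc_cong_refl trunc_cong_square_pcompose_x2)
  from trunc_cong_replace[OF this this assms]
  show ?thesis
    unfolding trunc_cong_pcompose_x2_iff .
qed

lemma not_trunc_cong_twisted_squares: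
  fixes U V :: "int poly"
  assumes n: "n \<ge> 1" and kl: "odd (k + l)" and U0: "odd (coeff U 0)" and V0: "odd (coeff V 0)"
  shows "\<not> trunc_cong 4 (2 * n) (U\<^sup>2 * (1 + monom 1 (2 * n)) ^ k) (V\<^sup>2 * (1 + monom 1 (2 * n)) ^ l)"
proof
  assume cong: "trunc_cong 4 (2 * n) (U\<^sup>2 * (1 + monom 1 (2 * n)) ^ k) (V\<^sup>2 * (1 + monom 1 (2 * n)) ^ l)"
  have "trunc_cong 0 n (1 + monom 1 (2 * n)) 1"
    using n by (simp add: trunc_cong_def coeff_monom)
  then have "trunc_cong 4 n ((1 + monom 1 (2 * n)) ^ j) 1" for j
    using trunc_cong_mono[OF trunc_cong_power] by fastforce
  then have drop_twist: "trunc_cong 4 n (W\<^sup>2 * (1 + monom 1 (2 * n)) ^ j) (W\<^sup>2)" for W j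
    using trunc_cong_mult[OF trunc_cong_refl] by fastforce
  have "trunc_cong 4 n (U\<^sup>2) (V\<^sup>2)"
    using trunc_cong_replace[OF drop_twist drop_twist trunc_cong_mono[OF cong]] by simp
  then have low: "4 dvd coeff (U\<^sup>2) n - coeff (V\<^sup>2) n"
    by (simp add: trunc_cong_def)
  have "trunc_cong 2 n (U * (1 + monom 1 n) ^ k) (V * (1 + monom 1 n) ^ l)"
    using trunc_cong_halve_twisted_squares trunc_cong_mono[OF cong] by simp
  then have squares: "trunc_cong 4 n ((U * (1 + monom 1 n) ^ k)\<^sup>2) ((V * (1 + monom 1 n) ^ l)\<^sup>2)"
    by (rule trunc_cong_squares)
  from trunc_cong_replace[OF trunc_cong_square_one_plus_monom_power[OF n]
      trunc_cong_square_one_plus_monom_power[OF n] squares]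
  have "4 dvd (coeff (U\<^sup>2) n + 2 * int k * (coeff U 0)\<^sup>2)
      - (coeff (V\<^sup>2) n + 2 * int l * (coeff V 0)\<^sup>2)"
    by (auto simp: trunc_cong_def coeff_mult_one_plus_monom power2_eq_square coeff_mult_0 dest!: spec[of _ n])
  moreover have "odd (int k * (coeff U 0)\<^sup>2 - int l * (coeff V 0)\<^sup>2)"
    using kl U0 V0 by simp
  moreover have "\<not> (4 dvd (a + 2 * s) - (b + 2 * t) \<and> 4 dvd a - b \<and> odd (s - t))" for a b s t :: int
    by presburger
  ultimately show False
    using low by (metis mult.assoc)
qed

section \<open>Existence and uniqueness of \<open>log\<^sub>\<int>\<close>\<close>

lemma coeff_0_expZ_pos: "coeff (expZ_pos b N) 0 = 1"
  unfolding expZ_pos_def poly_0_coeff_0[symmetric] poly_prod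
  by (auto intro!: prod.neutral simp: poly_monom zero_power)

lemma coeff_0_expZ_neg: "coeff (expZ_neg b N) 0 = 1"
  unfolding expZ_neg_def poly_0_coeff_0[symmetric] poly_prod
  by (auto intro!: prod.neutral simp: poly_monom zero_power)

lemma expZ_pos_Suc: "expZ_pos b (Suc m) = expZ_pos b m * (1 + (- [:0, 1:]) ^ Suc m) ^ nat (b (Suc m))"
  by (simp add: expZ_pos_def)

lemma expZ_neg_Suc: "expZ_neg b (Suc m) = expZ_neg b m * (1 + (- [:0, 1:]) ^ Suc m) ^ nat (- b (Suc m))"
  by (simp add: expZ_neg_def)

lemma trunc_cong_expZ_factor:
  assumes "s \<ge> 1"
  shows "trunc_cong 0 s ((1 + (- [:0, 1:]) ^ s) ^ e) (1 + monom (of_nat e * (-1) ^ s) s)"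
  using trunc_cong_one_plus_monom_power[OF assms] by (simp add: neg_x_power)

definition expZ_defect :: "int poly \<Rightarrow> (nat \<Rightarrow> int) \<Rightarrow> nat \<Rightarrow> int poly" where
  "expZ_defect c b N = c * expZ_neg b N - expZ_pos b N"

lemma is_logZ_iff_defect:
  "is_logZ c b \<longleftrightarrow> b 0 = 0 \<and> (\<forall>N k. k \<le> N \<longrightarrow> coeff (expZ_defect c b N) k = 0)"
  by (simp add: is_logZ_def expZ_defect_def)

lemma coeff_expZ_defect_Suc:
  assumes c0: "coeff c 0 = 1" and j: "j \<le> Suc m"
  shows "coeff (expZ_defect c b (Suc m)) j
    = coeff (expZ_defect c b m) j - (if j = Suc m then (-1) ^ Suc m * b (Suc m) else 0)"
proof -
  have factor: "coeff (A * (1 + (- [:0, 1:]) ^ Suc m) ^ e) j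
      = coeff A j + (if j = Suc m then of_nat e * (-1) ^ Suc m * coeff A 0 else 0)"
    for A :: "int poly" and e :: nat
  proof -
    have "trunc_cong 0 (Suc m) (A * (1 + (- [:0, 1:]) ^ Suc m) ^ e) (A * (1 + monom (of_nat e * (-1) ^ Suc m) (Suc m)))"
      using trunc_cong_expZ_factor[of "Suc m" e] by (simp add: trunc_cong_mult)
    then show ?thesis
      using j by (simp add: trunc_cong_def coeff_mult_one_plus_monom)
  qed
  have "int (nat (- x)) * y - int (nat x) * y = - (x * y)" for x y :: int
    by (cases "x \<ge> 0") auto
  then show ?thesis
    unfolding expZ_defect_def expZ_pos_Suc expZ_neg_Suc mult.assoc[symmetric] coeff_diff factor
    by (simp add: coeff_mult_0 c0 coeff_0_expZ_pos coeff_0_expZ_neg algebra_simps)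
qed

lemma expZ_defect_cong:
  "(\<And>i. 1 \<le> i \<Longrightarrow> i \<le> N \<Longrightarrow> b i = b' i) \<Longrightarrow> expZ_defect c b N = expZ_defect c b' N"
  unfolding expZ_defect_def expZ_pos_def expZ_neg_def by (auto intro!: prod.cong arg_cong2[where f = "(-)"])

lemma is_logZ_unique:
  assumes c0: "coeff c 0 = 1" and b: "is_logZ c b" and b': "is_logZ c b'"
  shows "b = b'"
proof -
  have "\<forall>i\<le>n. b i = b' i" for n
  proof (induction n)
    case 0
    then show ?case using b b' by (simp add: is_logZ_iff_defect)
  next
    case (Suc m)
    have "expZ_defect c b m = expZ_defect c b' m"
      using Suc.IH by (intro expZ_defect_cong) auto
    moreover have "coeff (expZ_defect c b (Suc m)) (Suc m) = 0" "coeff (expZ_defect c b' (Suc m)) (Suc m) = 0"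
      using b b' by (auto simp: is_logZ_iff_defect)
    ultimately have "b (Suc m) = b' (Suc m)"
      using coeff_expZ_defect_Suc[OF c0, of "Suc m" m b] coeff_expZ_defect_Suc[OF c0, of "Suc m" m b']
      by simp (metis add_left_cancel mult_cancel_left power_eq_0_iff zero_neq_neg_one)
    then show ?case using Suc.IH le_Suc_eq by auto
  qed
  then show ?thesis by auto
qed

text \<open>The \<open>n\<close>-th exponent is chosen to cancel the coefficient of \<open>x\<^sup>n\<close> in the defect left
  by the exponents before it.\<close>

fun logZ_approx :: "int poly \<Rightarrow> nat \<Rightarrow> nat \<Rightarrow> int" where
  "logZ_approx c 0 = (\<lambda>_. 0)"
| "logZ_approx c (Suc n) =
    (logZ_approx c n)(Suc n := (-1) ^ Suc n * coeff (expZ_defect c (logZ_approx c n) n) (Suc n))"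

lemma logZ_approx_stable: "i \<le> n \<Longrightarrow> logZ_approx c n i = logZ_approx c i i"
  by (induction n) (auto simp: le_Suc_eq)

lemma is_logZ_logZ_approx:
  assumes c0: "coeff c 0 = 1"
  shows "is_logZ c (\<lambda>i. logZ_approx c i i)"
proof -
  define b where "b = (\<lambda>i. logZ_approx c i i)"
  have defect: "expZ_defect c b N = expZ_defect c (logZ_approx c N) N" for N
    by (rule expZ_defect_cong) (metis b_def logZ_approx_stable)
  have "\<forall>k\<le>N. coeff (expZ_defect c b N) k = 0" for N
  proof (induction N)
    case 0
    then show ?case using c0 by (simp add: expZ_defect_def expZ_pos_def expZ_neg_def)
  next
    case (Suc m)
    have "b (Suc m) = (-1) ^ Suc m * coeff (expZ_defect c b m) (Suc m)"
      unfolding defect by (simp add: b_def)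
    then show ?case
      using Suc.IH coeff_expZ_defect_Suc[OF c0, of _ m b] by (auto simp: le_Suc_eq)
  qed
  moreover have "b 0 = 0" by (simp add: b_def)
  ultimately show ?thesis
    unfolding is_logZ_iff_defect b_def by simp
qed

lemma is_logZ_logZ: "coeff c 0 = 1 \<Longrightarrow> is_logZ c (logZ c)"
  unfolding logZ_def using is_logZ_logZ_approx is_logZ_unique by (metis theI)

section \<open>Squares modulo 4 and the parity of \<open>log\<^sub>\<int>\<close>\<close>

definition triple_prod :: "int poly \<Rightarrow> int poly" where
  "triple_prod q = q * pcompose q [:0, 0, 1:] * pcompose q [:0, -1:]"

lemma triple_prod_1 [simp]: "triple_prod 1 = 1"
  by (simp add: triple_prod_def pcompose_1)

lemma triple_prod_mult: "triple_prod (p * q) = triple_prod p * triple_prod q"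
  by (simp add: triple_prod_def pcompose_mult mult_ac)

lemma triple_prod_power: "triple_prod (p ^ k) = triple_prod p ^ k"
  by (induction k) (simp_all add: triple_prod_mult)

lemma triple_prod_prod: "triple_prod (prod f A) = (\<Prod>i\<in>A. triple_prod (f i))"
  by (induction A rule: infinite_finite_induct) (simp_all add: triple_prod_mult)

lemma coeff_0_triple_prod: "coeff (triple_prod q) 0 = coeff q 0 ^ 3"
  by (simp add: triple_prod_def coeff_mult_0 power3_eq_cube poly_0_coeff_0)

lemma trunc_cong_triple_prod: "trunc_cong m N p q \<Longrightarrow> trunc_cong m N (triple_prod p) (triple_prod q)"
  unfolding triple_prod_def
  by (intro trunc_cong_mult trunc_cong_pcompose_neg_x) (simp_all add: trunc_cong_def coeff_pcompose_x2)

definition sq_factor :: "nat \<Rightarrow> int poly" where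
  "sq_factor i = (if even i then 1 + monom 1 i else 1 - monom 1 (2 * i))"

definition twist_factor :: "nat \<Rightarrow> int poly" where
  "twist_factor i = (if even i then 1 + monom 1 (2 * i) else 1)"

lemma triple_prod_expZ_factor: "triple_prod (1 + (- [:0, 1:]) ^ i) = (sq_factor i)\<^sup>2 * twist_factor i"
proof -
  have "pcompose (monom a i) [:0, -1:] = monom ((-1) ^ i * a) i" for a :: int
    by (rule poly_eqI) (simp add: coeff_pcompose_neg_x coeff_monom)
  then have "triple_prod (1 + (- [:0, 1:]) ^ i)
      = (1 + monom ((-1) ^ i) i) * (1 + monom ((-1) ^ i) (2 * i)) * (1 + monom 1 i)"
    by (simp add: triple_prod_def neg_x_power pcompose_add pcompose_1 pcompose_monom_x2 flip: power_add)
  also have "\<dots> = (sq_factor i)\<^sup>2 * twist_factor i"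
    by (cases "even i")
      (simp_all add: sq_factor_def twist_factor_def power2_eq_square algebra_simps mult_monom
        flip: mult_2 minus_monom)
  finally show ?thesis .
qed

definition sq_part :: "(nat \<Rightarrow> nat) \<Rightarrow> nat \<Rightarrow> int poly" where
  "sq_part e N = (\<Prod>i\<in>{1..N}. sq_factor i ^ e i)"

definition twist_part :: "(nat \<Rightarrow> nat) \<Rightarrow> nat \<Rightarrow> int poly" where
  "twist_part e N = (\<Prod>i\<in>{1..N}. twist_factor i ^ e i)"

lemma triple_prod_expZ_pos:
  "triple_prod (expZ_pos b N) = (sq_part (\<lambda>i. nat (b i)) N)\<^sup>2 * twist_part (\<lambda>i. nat (b i)) N"
proof -
  have "triple_prod (expZ_pos b N) = (\<Prod>i\<in>{1..N}. (sq_factor i ^ nat (b i))\<^sup>2 * twist_factor i ^ nat (b i))"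
    unfolding expZ_pos_def triple_prod_prod triple_prod_power triple_prod_expZ_factor
    by (simp add: power_mult_distrib flip: power_mult[of _ 2] power_mult[of _ _ 2] mult.commute[of 2])
  then show ?thesis
    by (simp add: sq_part_def twist_part_def prod.distrib prod_power_distrib)
qed

lemma triple_prod_expZ_neg:
  "triple_prod (expZ_neg b N) = (sq_part (\<lambda>i. nat (- b i)) N)\<^sup>2 * twist_part (\<lambda>i. nat (- b i)) N"
  using triple_prod_expZ_pos[of "\<lambda>i. - b i"] by (simp add: expZ_neg_def expZ_pos_def)

lemma coeff_0_sq_part: "coeff (sq_part e N) 0 = 1"
  unfolding sq_part_def poly_0_coeff_0[symmetric] poly_prod
  by (auto intro!: prod.neutral simp: sq_factor_def poly_monom zero_power)

lemma coeff_0_twist_part: "coeff (twist_part e N) 0 = 1"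
  unfolding twist_part_def poly_0_coeff_0[symmetric] poly_prod
  by (auto intro!: prod.neutral simp: twist_factor_def poly_monom zero_power)

lemma twist_part_split:
  "twist_part e N = (twist_part (\<lambda>i. e i div 2) N)\<^sup>2 * twist_part (\<lambda>i. e i mod 2) N"
proof -
  have "x ^ e i = (x ^ (e i div 2))\<^sup>2 * x ^ (e i mod 2)" for x :: "int poly" and i
    by (metis power_add power_mult div_mult_mod_eq mult.commute)
  then show ?thesis
    by (simp add: twist_part_def prod.distrib flip: prod_power_distrib)
qed

lemma twist_part_parity_eq_1:
  "(\<And>i. 1 \<le> i \<Longrightarrow> i \<le> N \<Longrightarrow> even i \<Longrightarrow> even (e i)) \<Longrightarrow> twist_part (\<lambda>i. e i mod 2) N = 1"
  unfolding twist_part_def by (rule prod.neutral) (auto simp: twist_factor_def)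

lemma trunc_cong_twist_part_parity:
  assumes n: "n \<ge> 1" and even_below: "\<And>i. 1 \<le> i \<Longrightarrow> i < n \<Longrightarrow> even i \<Longrightarrow> even (e i)"
  shows "trunc_cong m (2 * n) (twist_part (\<lambda>i. e i mod 2) (2 * n)) (twist_factor n ^ (e n mod 2))"
proof -
  have "trunc_cong m (2 * n) (twist_factor i ^ (e i mod 2)) (if i = n then twist_factor n ^ (e n mod 2) else 1)"
    if i: "i \<in> {1..2 * n}" for i
  proof (cases i n rule: linorder_cases)
    case less
    then show ?thesis
      using even_below[of i] i by (auto simp: twist_factor_def)
  next
    case greater
    then have "trunc_cong m (2 * n) (twist_factor i) 1"
      by (auto simp: twist_factor_def trunc_cong_def coeff_monom)
    then show ?thesis
      using greater trunc_cong_power[of m "2 * n" "twist_factor i" 1] by simp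
  qed simp
  then have "trunc_cong m (2 * n) (twist_part (\<lambda>i. e i mod 2) (2 * n))
      (\<Prod>i\<in>{1..2 * n}. if i = n then twist_factor n ^ (e n mod 2) else 1)"
    unfolding twist_part_def by (rule trunc_cong_prod)
  then show ?thesis
    using n by simp
qed

definition root_part :: "(nat \<Rightarrow> nat) \<Rightarrow> nat \<Rightarrow> int poly" where
  "root_part e N = sq_part e N * twist_part (\<lambda>i. e i div 2) N"

lemma coeff_0_root_part: "coeff (root_part e N) 0 = 1"
  by (simp add: root_part_def coeff_mult_0 coeff_0_sq_part coeff_0_twist_part)

lemma sq_twist_parts_eq_root_part_square:
  assumes "\<And>i. 1 \<le> i \<Longrightarrow> i \<le> N \<Longrightarrow> even i \<Longrightarrow> even (e i)"
  shows "(sq_part e N)\<^sup>2 * twist_part e N = (root_part e N)\<^sup>2"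
  using twist_part_split[of e N] twist_part_parity_eq_1[OF assms] by (simp add: root_part_def power_mult_distrib)

lemma trunc_cong_sq_twist_parts_root_part:
  assumes n: "n \<ge> 1" "even n" and even_below: "\<And>i. 1 \<le> i \<Longrightarrow> i < n \<Longrightarrow> even i \<Longrightarrow> even (e i)"
  shows "trunc_cong m (2 * n) ((sq_part e (2 * n))\<^sup>2 * twist_part e (2 * n))
    ((root_part e (2 * n))\<^sup>2 * (1 + monom 1 (2 * n)) ^ (e n mod 2))"
proof -
  have "twist_factor n = 1 + monom 1 (2 * n)"
    using n(2) by (simp add: twist_factor_def)
  then have "trunc_cong m (2 * n) (twist_part (\<lambda>i. e i mod 2) (2 * n)) ((1 + monom 1 (2 * n)) ^ (e n mod 2))"
    using trunc_cong_twist_part_parity[OF n(1) even_below] by simp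
  then show ?thesis
    unfolding twist_part_split[of e] root_part_def power_mult_distrib mult.assoc[symmetric]
    by (rule trunc_cong_mult[OF trunc_cong_refl])
qed

lemma trunc_cong_triple_prod_logZ:
  assumes "coeff c 0 = 1"
  shows "trunc_cong m N
    (triple_prod c * (sq_part (\<lambda>i. nat (- logZ c i)) N)\<^sup>2 * twist_part (\<lambda>i. nat (- logZ c i)) N)
    ((sq_part (\<lambda>i. nat (logZ c i)) N)\<^sup>2 * twist_part (\<lambda>i. nat (logZ c i)) N)"
proof -
  have "trunc_cong 0 N (c * expZ_neg (logZ c) N) (expZ_pos (logZ c) N)"
    using is_logZ_logZ[OF assms] by (simp add: is_logZ_def trunc_cong_def)
  then have "trunc_cong 0 N (triple_prod (c * expZ_neg (logZ c) N)) (triple_prod (expZ_pos (logZ c) N))"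
    by (rule trunc_cong_triple_prod)
  then show ?thesis
    unfolding triple_prod_mult triple_prod_expZ_pos triple_prod_expZ_neg mult.assoc
    by (rule trunc_cong_mono) simp_all
qed

lemma even_nat: "even k \<Longrightarrow> even (nat k)"
  by (cases "k \<ge> 0") (auto simp: even_nat_iff)

lemma mod4_square_triple_prod_if_even_logZ:
  assumes c0: "coeff c 0 = 1" and even_logZ: "\<forall>j\<ge>1. even (logZ c (2 * j))"
  shows "\<exists>g. mod4 (triple_prod c) = mod4 (g\<^sup>2)"
proof -
  define N where "N = 4 * degree (triple_prod c)"
  define ep where "ep = (\<lambda>i. nat (logZ c i))"
  define en where "en = (\<lambda>i. nat (- logZ c i))"
  obtain v where v: "trunc_cong 4 N (root_part en N * v) 1"
    using trunc_cong_inverse coeff_0_root_part by blast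
  have "even (logZ c i)" if "1 \<le> i" "even i" for i
    using that even_logZ by (auto elim!: evenE)
  then have "trunc_cong 4 N (triple_prod c * (root_part en N)\<^sup>2) ((root_part ep N)\<^sup>2)"
    using trunc_cong_triple_prod_logZ[OF c0, of 4 N]
    by (simp add: ep_def en_def mult.assoc sq_twist_parts_eq_root_part_square even_nat)
  from trunc_cong_mult[OF this trunc_cong_refl[of 4 N "v\<^sup>2"]]
  have "trunc_cong 4 N (triple_prod c * (root_part en N * v)\<^sup>2) ((root_part ep N * v)\<^sup>2)"
    by (simp add: power_mult_distrib mult.assoc)
  moreover have "trunc_cong 4 N (triple_prod c * (root_part en N * v)\<^sup>2) (triple_prod c)"
    using trunc_cong_mult[OF trunc_cong_refl trunc_cong_power[OF v, of 2]] by simp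
  ultimately have "trunc_cong 4 N (triple_prod c) ((root_part ep N * v)\<^sup>2)"
    using trunc_cong_replace trunc_cong_refl by blast
  then show ?thesis
    using mod4_square_of_trunc_cong_square N_def by blast
qed

lemma even_logZ_if_mod4_square_triple_prod:
  assumes c0: "coeff c 0 = 1" and square: "mod4 (triple_prod c) = mod4 (g\<^sup>2)"
  shows "\<forall>j\<ge>1. even (logZ c (2 * j))"
proof (rule ccontr)
  assume "\<not> (\<forall>j\<ge>1. even (logZ c (2 * j)))"
  then obtain j where j: "j \<ge> 1" "odd (logZ c (2 * j))"
    and least: "\<And>j'. j' < j \<Longrightarrow> j' \<ge> 1 \<Longrightarrow> even (logZ c (2 * j'))"
    using exists_least_iff[of "\<lambda>j. j \<ge> 1 \<and> odd (logZ c (2 * j))"] by auto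
  define n where "n = 2 * j"
  have n: "n \<ge> 1" "even n" using j by (simp_all add: n_def)
  define ep where "ep = (\<lambda>i. nat (logZ c i))"
  define en where "en = (\<lambda>i. nat (- logZ c i))"
  have "even (logZ c i)" if "1 \<le> i" "i < n" "even i" for i
    using that least[of "i div 2"] by (auto simp: n_def elim!: evenE)
  then have ep_split: "trunc_cong 4 (2 * n) ((sq_part ep (2 * n))\<^sup>2 * twist_part ep (2 * n))
        ((root_part ep (2 * n))\<^sup>2 * (1 + monom 1 (2 * n)) ^ (ep n mod 2))"
    and en_split: "trunc_cong 4 (2 * n) ((sq_part en (2 * n))\<^sup>2 * twist_part en (2 * n))
        ((root_part en (2 * n))\<^sup>2 * (1 + monom 1 (2 * n)) ^ (en n mod 2))"
    by (auto intro!: trunc_cong_sq_twist_parts_root_part[OF n] simp: ep_def en_def even_nat)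
  have "trunc_cong 4 (2 * n) (triple_prod c * ((sq_part en (2 * n))\<^sup>2 * twist_part en (2 * n)))
      ((sq_part ep (2 * n))\<^sup>2 * twist_part ep (2 * n))"
    using trunc_cong_triple_prod_logZ[OF c0, of 4 "2 * n"] by (simp add: ep_def en_def mult.assoc)
  moreover have "trunc_cong 4 (2 * n) (triple_prod c) (g\<^sup>2)"
    using square by (simp add: mod4_eq_iff_trunc_cong)
  ultimately have "trunc_cong 4 (2 * n)
      (g\<^sup>2 * ((root_part en (2 * n))\<^sup>2 * (1 + monom 1 (2 * n)) ^ (en n mod 2)))
      ((root_part ep (2 * n))\<^sup>2 * (1 + monom 1 (2 * n)) ^ (ep n mod 2))"
    using trunc_cong_replace[OF trunc_cong_mult ep_split] en_split by blast
  then have "trunc_cong 4 (2 * n) ((g * root_part en (2 * n))\<^sup>2 * (1 + monom 1 (2 * n)) ^ (en n mod 2))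
      ((root_part ep (2 * n))\<^sup>2 * (1 + monom 1 (2 * n)) ^ (ep n mod 2))"
    by (simp add: power_mult_distrib mult.assoc)
  moreover have "odd (en n mod 2 + ep n mod 2)"
    using j by (cases "logZ c n \<ge> 0") (auto simp: en_def ep_def n_def even_nat_iff)
  moreover have "odd (coeff g 0)"
  proof -
    have "4 dvd coeff (triple_prod c) 0 - coeff (g\<^sup>2) 0"
      using square by (simp add: mod4_eq_iff_trunc_cong trunc_cong_def)
    then have "4 dvd 1 - (coeff g 0)\<^sup>2"
      by (simp add: coeff_0_triple_prod c0 power2_eq_square coeff_mult_0)
    then have "2 dvd 1 - (coeff g 0)\<^sup>2"
      by (rule dvd_trans[rotated]) simp
    then show ?thesis
      by simp
  qed
  ultimately show False
    using not_trunc_cong_twisted_squares[OF n(1)] by (simp add: coeff_mult_0 coeff_0_root_part)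
qed

section \<open>Conway polynomials\<close>

lemma coeff_sum_monom_even_coeffs:
  "coeff (\<Sum>n\<le>degree p. monom (coeff p (2 * n)) n) m = coeff p (2 * m)"
proof (cases "m \<le> degree p")
  case False
  then have "coeff p (2 * m) = 0" by (intro coeff_eq_0) simp
  then show ?thesis using False by (auto simp: coeff_sum coeff_monom intro!: sum.neutral)
qed (simp add: coeff_sum_monom)

lemma even_poly_eq_pcompose_x2:
  fixes F :: "'a::comm_semiring_1 poly"
  assumes "\<forall>n. odd n \<longrightarrow> coeff F n = 0"
  obtains f where "F = pcompose f [:0, 0, 1:]"
proof
  show "F = pcompose (\<Sum>n\<le>degree F. monom (coeff F (2 * n)) n) [:0, 0, 1:]"
    using assms by (intro poly_eqI) (auto simp: coeff_pcompose_x2 coeff_sum_monom_even_coeffs)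
qed

lemma mod4_mult: "mod4 (p * q) = mod4 p * mod4 q"
  unfolding mod4_def by (rule poly_eqI) (simp add: coeff_map_poly coeff_mult)

lemma mod4_pcompose_x2: "mod4 (pcompose p [:0, 0, 1:]) = pcompose (mod4 p) [:0, 0, 1:]"
  unfolding mod4_def by (rule poly_eqI) (simp add: coeff_map_poly coeff_pcompose_x2)

lemma mod4_surj: "\<exists>g. mod4 g = f"
proof
  have "of_int (Rep_bit0 x) = x" for x :: 4
    unfolding bit0.of_int_eq bit0.Rep_mod by (rule bit0.Rep_inverse)
  then show "mod4 (map_poly Rep_bit0 f) = f"
    unfolding mod4_def by (intro poly_eqI) (simp add: coeff_map_poly bit0.Rep_0)
qed

lemma ex_even_square_mod4_pcompose_x2_iff:
  "(\<exists>F :: 4 poly. (\<forall>n. odd n \<longrightarrow> coeff F n = 0) \<and> F\<^sup>2 = mod4 (pcompose Q [:0, 0, 1:]))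
    \<longleftrightarrow> (\<exists>g. mod4 Q = mod4 (g\<^sup>2))"
proof
  assume "\<exists>F :: 4 poly. (\<forall>n. odd n \<longrightarrow> coeff F n = 0) \<and> F\<^sup>2 = mod4 (pcompose Q [:0, 0, 1:])"
  then obtain F f :: "4 poly" where F: "F\<^sup>2 = mod4 (pcompose Q [:0, 0, 1:])" and f: "F = pcompose f [:0, 0, 1:]"
    by (metis even_poly_eq_pcompose_x2)
  obtain g where g: "mod4 g = f"
    using mod4_surj by blast
  have "pcompose (mod4 (g\<^sup>2)) [:0, 0, 1:] = pcompose (mod4 Q) [:0, 0, 1:]"
    using F by (simp add: f g power2_eq_square mod4_mult pcompose_mult mod4_pcompose_x2)
  then show "\<exists>g. mod4 Q = mod4 (g\<^sup>2)"
    unfolding pcompose_x2_inject by metis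
next
  assume "\<exists>g. mod4 Q = mod4 (g\<^sup>2)"
  then obtain g where "mod4 Q = mod4 (g\<^sup>2)" by blast
  then show "\<exists>F :: 4 poly. (\<forall>n. odd n \<longrightarrow> coeff F n = 0) \<and> F\<^sup>2 = mod4 (pcompose Q [:0, 0, 1:])"
    by (intro exI[of _ "pcompose (mod4 g) [:0, 0, 1:]"])
      (simp add: coeff_pcompose_x2 mod4_pcompose_x2 power2_eq_square mod4_mult pcompose_mult)
qed

lemma coeff_conway_x: "coeff (conway_x C) m = coeff C (2 * m)"
  unfolding conway_x_def by (rule coeff_sum_monom_even_coeffs)

lemma conway_x_pcompose_x2: "conway_type C \<Longrightarrow> pcompose (conway_x C) [:0, 0, 1:] = C"
  unfolding conway_type_def by (intro poly_eqI) (auto simp: coeff_pcompose_x2 coeff_conway_x)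

lemma conway_iz_eq:
  assumes "conway_type C"
  shows "conway_iz C = pcompose (pcompose (conway_x C) [:0, -1:]) [:0, 0, 1:]"
proof (rule poly_eqI)
  fix n
  have "coeff (conway_iz C) n = (if even n then (-1) ^ (n div 2) * coeff C n else 0)"
  proof (cases "n \<le> degree C")
    case False
    then have "coeff C n = 0" by (intro coeff_eq_0) simp
    then show ?thesis
      using False unfolding conway_iz_def by (auto simp: coeff_sum coeff_monom intro!: sum.neutral)
  qed (simp add: conway_iz_def coeff_sum_monom)
  then show "coeff (conway_iz C) n = coeff (pcompose (pcompose (conway_x C) [:0, -1:]) [:0, 0, 1:]) n"
    by (simp add: coeff_pcompose_x2 coeff_pcompose_neg_x coeff_conway_x)
qed

lemma conway_product_eq:
  "conway_type C \<Longrightarrow> C * conway_sq C * conway_iz C = pcompose (triple_prod (conway_x C)) [:0, 0, 1:]"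
  unfolding conway_sq_def triple_prod_def pcompose_mult conway_iz_eq
  by (simp add: conway_x_pcompose_x2)

lemma conway_square_mod4_iff_even_pc:
  assumes "conway_type C"
  shows "(\<exists>F :: 4 poly. (\<forall>n. odd n \<longrightarrow> coeff F n = 0) \<and> F ^ 2 = mod4 (C * conway_sq C * conway_iz C))
    \<longleftrightarrow> (\<forall>i\<ge>1. even (pc C (4 * i)))"
proof -
  have "coeff (conway_x C) 0 = 1"
    using assms by (simp add: coeff_conway_x conway_type_def)
  moreover have "pc C (4 * i) = logZ (conway_x C) (2 * i)" for i
    by (simp add: pc_def)
  ultimately show ?thesis
    unfolding conway_product_eq[OF assms] ex_even_square_mod4_pcompose_x2_iff
    using mod4_square_triple_prod_if_even_logZ even_logZ_if_mod4_square_triple_prod by metis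
qed

theorem mainTheorem5:
  fixes amphicheiral :: "'k \<Rightarrow> bool"
    and conway :: "'k \<Rightarrow> int poly"
  assumes "\<forall>K. conway_type (conway K)"
  shows "(\<forall>K. amphicheiral K \<longrightarrow>
            (\<exists>F :: 4 poly. (\<forall>n. odd n \<longrightarrow> coeff F n = 0) \<and>
               F ^ 2 = mod4 (conway K * conway_sq (conway K) * conway_iz (conway K))))
     \<longleftrightarrow>
     (\<forall>K. amphicheiral K \<longrightarrow> (\<forall>i\<ge>1. even (pc (conway K) (4 * i))))"
  using conway_square_mod4_iff_even_pc assms by blast

end
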